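(* Let $\alpha>0$ and let $m_\alpha(a,b)$ be a polynomial in two variables satisfying $|m_\alpha(a,b)-\max(a,b)|\le 2^{-\alpha}$ for all $a,b\in[0,1]$. For $n\in\mathbb{N}$ define polynomials $M_{\alpha,n}(x_1,\dots,x_n)$ recursively by $M_{\alpha,1}(x_1)=x_1$, $$M_{\alpha,2k}(x_1,\dots,x_{2k})=m_\alpha\big(M_{\alpha,k}(x_1,\dots,x_k),\,M_{\alpha,k}(x_{k+1},\dots,x_{2k})\big),$$ $$M_{\alpha,2k+1}(x_1,\dots,x_{2k+1})=m_\alpha\big(M_{\alpha,k}(x_1,\dots,x_k),\,M_{\alpha,k+1}(x_{k+1},\dots,x_{2k+1})\big)$$ for $k\ge1$. Then for every $n\in\mathbb{N}$, $$|M_{\alpha,n}(x_1,\dots,x_n)-\max(x_1,\dots,x_n)|\le 2^{-\alpha}\lceil\log_2 n\rceil$$ for all $x_1,\dots,x_n\in\big[(\lceil\log_2 n\rceil-1)2^{-\alpha},\,1-(\lceil\log_2 n\rceil-1)2^{-\alpha}\big]$. *)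

theory Defs
  imports Complex_Main
begin

definition is_poly2 :: "(real \<Rightarrow> real \<Rightarrow> real) \<Rightarrow> bool" where
  "is_poly2 m \<longleftrightarrow> (\<exists>(c :: nat \<Rightarrow> nat \<Rightarrow> real) (N :: nat).
      m = (\<lambda>a b. \<Sum>i\<le>N. \<Sum>j\<le>N. c i j * a ^ i * b ^ j))"

text \<open>M m n x = M_{alpha,n}(x_0, ..., x_{n-1}) (0-indexed arguments).
  The value for n = 0 is junk (never used).\<close>
function Mrec :: "(real \<Rightarrow> real \<Rightarrow> real) \<Rightarrow> nat \<Rightarrow> (nat \<Rightarrow> real) \<Rightarrow> real" where
  "Mrec m n x = (if n \<le> 1 then x 0
     else m (Mrec m (n div 2) x) (Mrec m (n - n div 2) (\<lambda>i. x (i + n div 2))))"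
  by pat_completeness auto
termination by (relation "measure (\<lambda>(m, n, x). n)") auto

end

(*
  Put L = ceil(log2 n) and d = (L - 1) 2^-alpha. Both halves
  of the argument list have length at most ceil(n/2), so their ceil(log2) is at most L - 1: the
  hypothesis on the arguments is inherited by each half, and by induction the two recursive
  values lie within d of the maxima of the halves. Since those maxima lie in [d, 1 - d], the
  recursive values lie in [0, 1], where m_alpha is 2^-alpha-close to max; as max is
  1-Lipschitz in each argument, the errors add up to 2^-alpha + d = L 2^-alpha.
*)
theory Submission
  imports Defs
begin

(* Unconditional for symbolic n, so as a simp rule it would unfold forever. *)
declare Mrec.simps [simp del]

lemma ceiling_log2_le_of_le_half:
  fixes n s :: nat
  assumes "n \<ge> 2" "1 \<le> s" "s \<le> n - n div 2"
  shows "\<lceil>log 2 (real s)\<rceil> + 1 \<le> \<lceil>log 2 (real n)\<rceil>"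
proof -
  have upper_half: "n - n div 2 = (n - 1) div 2 + 1" using assms(1) by arith
  have "\<lceil>log 2 (real s)\<rceil> \<le> \<lceil>log 2 (real ((n - 1) div 2 + 1))\<rceil>"
    using assms by (intro ceiling_mono) (simp add: upper_half)
  also have "\<dots> + 1 = \<lceil>log 2 (real n)\<rceil>"
    using ceiling_log2_div2[OF assms(1)] by simp
  finally show ?thesis by simp
qed

lemma max_approx_perturbed:
  fixes m :: "real \<Rightarrow> real \<Rightarrow> real"
  assumes "\<forall>a\<in>{0..1}. \<forall>b\<in>{0..1}. \<bar>m a b - max a b\<bar> \<le> e"
    and "\<bar>a - A\<bar> \<le> d" "\<bar>b - B\<bar> \<le> d" "A \<in> {d..1 - d}" "B \<in> {d..1 - d}"
  shows "\<bar>m a b - max A B\<bar> \<le> e + d"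
proof -
  have "a \<in> {0..1}" "b \<in> {0..1}" using assms(2-5) by auto
  then have "\<bar>m a b - max a b\<bar> \<le> e" using assms(1) by blast
  moreover have "\<bar>max a b - max A B\<bar> \<le> d" using assms(2,3) by (auto simp: max_def)
  ultimately show ?thesis by linarith
qed

lemma Max_image_atLeastLessThan_split:
  fixes x :: "nat \<Rightarrow> 'a::linorder"
  assumes "0 < k" "k < n"
  shows "Max (x ` {0..<n}) = max (Max (x ` {0..<k})) (Max ((\<lambda>i. x (i + k)) ` {0..<n - k}))"
proof -
  have "{0..<n} = {0..<k} \<union> (\<lambda>i. i + k) ` {0..<n - k}"
    using assms by (auto simp: image_iff intro!: exI[of _ "_ - k"])
  then have "x ` {0..<n} = x ` {0..<k} \<union> (\<lambda>i. x (i + k)) ` {0..<n - k}"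
    by (metis image_Un image_image)
  then show ?thesis using assms by (simp add: Max_Un)
qed

lemma Mrec_split:
  "2 \<le> n \<Longrightarrow> Mrec m n x = m (Mrec m (n div 2) x) (Mrec m (n - n div 2) (\<lambda>i. x (i + n div 2)))"
  by (subst Mrec.simps) simp

lemma Mrec_approximates_Max:
  fixes m :: "real \<Rightarrow> real \<Rightarrow> real" and x :: "nat \<Rightarrow> real"
  assumes m_approx: "\<forall>a\<in>{0..1}. \<forall>b\<in>{0..1}. \<bar>m a b - max a b\<bar> \<le> e"
    and "n \<ge> 1"
    and "\<forall>i<n. x i \<in> {(of_int \<lceil>log 2 (real n)\<rceil> - 1) * e ..
                         1 - (of_int \<lceil>log 2 (real n)\<rceil> - 1) * e}"
  shows "\<bar>Mrec m n x - Max (x ` {0..<n})\<bar> \<le> e * of_int \<lceil>log 2 (real n)\<rceil>"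
  using assms(2,3)
proof (induction n arbitrary: x rule: less_induct)
  case (less n)
  show ?case
  proof (cases "n = 1")
    case True
    then show ?thesis by (simp add: Mrec.simps)
  next
    case False
    with less.prems(1) have "n \<ge> 2" by simp
    define k where "k = n div 2"
    define y where "y = (\<lambda>i. x (i + k))"
    define L where "L = \<lceil>log 2 (real n)\<rceil>"
    define d where "d = (of_int L - 1) * e"
    have "0 \<le> e" using m_approx[rule_format, of 0 0] by simp
    have k: "1 \<le> k" "k \<le> n - k" "k < n" using \<open>n \<ge> 2\<close> unfolding k_def by arith+
    have x_range: "\<forall>i<n. x i \<in> {d..1 - d}" using less.prems(2) by (simp add: d_def L_def)
    have half: "\<bar>Mrec m s z - Max (z ` {0..<s})\<bar> \<le> d \<and> Max (z ` {0..<s}) \<in> {d..1 - d}"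
      if "1 \<le> s" "s \<le> n - k" and z_range: "\<forall>i<s. z i \<in> {d..1 - d}" for s z
    proof -
      define Ls where "Ls = \<lceil>log 2 (real s)\<rceil>"
      have "of_int Ls + 1 \<le> real_of_int L"
        using ceiling_log2_le_of_le_half[OF \<open>n \<ge> 2\<close> that(1)] that(2)
        by (simp add: k_def L_def Ls_def)
      then have "e * (of_int Ls + 1) \<le> e * of_int L"
        using \<open>0 \<le> e\<close> by (rule mult_left_mono)
      then have err: "e * of_int Ls \<le> d" and "(of_int Ls - 1) * e \<le> d"
        using \<open>0 \<le> e\<close> by (simp_all add: d_def algebra_simps)
      then have "{d..1 - d} \<subseteq> {(of_int Ls - 1) * e .. 1 - (of_int Ls - 1) * e}" by auto
      with z_range have z_range': "\<forall>i<s. z i \<in> {(of_int Ls - 1) * e .. 1 - (of_int Ls - 1) * e}"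
        by blast
      have "s < n" using that(2) k by simp
      then have "\<bar>Mrec m s z - Max (z ` {0..<s})\<bar> \<le> e * of_int Ls"
        using that(1) z_range' unfolding Ls_def by (rule less.IH)
      moreover have "Max (z ` {0..<s}) \<in> z ` {0..<s}" by (rule Max_in) (use that(1) in auto)
      ultimately show ?thesis using err z_range by auto
    qed
    have left: "\<bar>Mrec m k x - Max (x ` {0..<k})\<bar> \<le> d \<and> Max (x ` {0..<k}) \<in> {d..1 - d}"
      by (rule half) (use k x_range in auto)
    have right:
      "\<bar>Mrec m (n - k) y - Max (y ` {0..<n - k})\<bar> \<le> d \<and> Max (y ` {0..<n - k}) \<in> {d..1 - d}"
      by (rule half) (use k x_range in \<open>auto simp: y_def\<close>)
    have "Mrec m n x = m (Mrec m k x) (Mrec m (n - k) y)"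
      unfolding k_def y_def by (rule Mrec_split[OF \<open>n \<ge> 2\<close>])
    moreover have "Max (x ` {0..<n}) = max (Max (x ` {0..<k})) (Max (y ` {0..<n - k}))"
      unfolding y_def using k by (intro Max_image_atLeastLessThan_split) auto
    moreover have "\<bar>m (Mrec m k x) (Mrec m (n - k) y) - max (Max (x ` {0..<k})) (Max (y ` {0..<n - k}))\<bar>
        \<le> e + d"
      by (rule max_approx_perturbed[OF m_approx]) (use left right in auto)
    moreover have "e + d = e * of_int L" by (simp add: d_def algebra_simps)
    ultimately show ?thesis unfolding L_def by simp
  qed
qed

theorem theorem2:
  fixes \<alpha> :: real and m :: "real \<Rightarrow> real \<Rightarrow> real" and n :: nat and x :: "nat \<Rightarrow> real"
  assumes "\<alpha> > 0"
    and "is_poly2 m"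
    and "\<forall>a\<in>{0..1}. \<forall>b\<in>{0..1}. \<bar>m a b - max a b\<bar> \<le> 2 powr (-\<alpha>)"
    and "n \<ge> 1"
    and "\<forall>i<n. x i \<in> {(of_int \<lceil>log 2 (real n)\<rceil> - 1) * 2 powr (-\<alpha>) ..
                         1 - (of_int \<lceil>log 2 (real n)\<rceil> - 1) * 2 powr (-\<alpha>)}"
  shows "\<bar>Mrec m n x - Max (x ` {0..<n})\<bar> \<le> 2 powr (-\<alpha>) * of_int \<lceil>log 2 (real n)\<rceil>"
  using assms(3-5) by (rule Mrec_approximates_Max)

end
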